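(* Let $\mathcal{X}\in\mathbb{C}^{n_1\times\cdots\times n_d}$, let $\mathcal{L}$ be an $r$-dimensional subspace of $\mathbb{C}^{n_1\times\cdots\times n_d}$ spanned by orthonormal tensors $\{\mathcal{T}_k\}_{k\in[r]}$, and let $\mathbb{P}_{\mathcal{L}^\perp}$ be the orthogonal projection onto the orthogonal complement of $\mathcal{L}$. Fix $\epsilon\in(0,1)$ and suppose a linear operator $L:\mathbb{C}^{n_1\times\cdots\times n_d}\to\mathbb{C}^{m_1\times\cdots\times m_{d'}}$ satisfies: (i) $L$ is an $(\epsilon/6)$-JL embedding of all $\mathcal{Y}\in\mathcal{L}\cup\{\mathbb{P}_{\mathcal{L}^\perp}(\mathcal{X})\}$; (ii) $L$ is an $(\epsilon/24\sqrt{r})$-JL embedding of the $4r$ tensors $$\mathcal{S}':=\bigcup_{k\in[r]}\Big\{\mathcal{P}-\mathcal{T}_k,\ \mathcal{P}+\mathcal{T}_k,\ \mathcal{P}-\mathrm{i}\,\mathcal{T}_k,\ \mathcal{P}+\mathrm{i}\,\mathcal{T}_k\Big\},\qquad \mathcal{P}:=\frac{\mathbb{P}_{\mathcal{L}^\perp}(\mathcal{X})}{\|\mathbb{P}_{\mathcal{L}^\perp}(\mathcal{X})\|}.$$ Let $\mathrm{vect}:\mathbb{C}^{m_1\times\cdots\times m_{d'}}\to\mathbb{C}^{\prod_{\ell=1}^{d'}m_\ell}$ be a reshaping vectorization operator and let $\mathbf{A}\in\mathbb{C}^{m\times\prod_{\ell}m_\ell}$ be an $(\epsilon/3)$-JL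 embedding into $\mathbb{C}^m$ of (every vector in) the subspace $$\mathcal{L}':=\mathrm{span}\{\mathrm{vect}(L(\mathbb{P}_{\mathcal{L}^\perp}(\mathcal{X}))),\mathrm{vect}(L(\mathcal{T}_1)),\dots,\mathrm{vect}(L(\mathcal{T}_r))\}.$$ Then $$\big|\|\mathbf{A}(\mathrm{vect}(L(\mathcal{X}-\mathcal{Y})))\|_2^2-\|\mathcal{X}-\mathcal{Y}\|^2\big|\le\epsilon\|\mathcal{X}-\mathcal{Y}\|^2\quad\text{for all }\mathcal{Y}\in\mathcal{L}.$$
   Context: Tensors carry the inner product $\langle\mathcal{X},\mathcal{Y}\rangle=\sum\mathcal{X}_{i_1\dots i_d}\overline{\mathcal{Y}_{i_1\dots i_d}}$ and norm $\|\cdot\|$; $\mathrm{i}$ is the imaginary unit. A linear map $L$ is an $\epsilon$-JL embedding of a set $S$ if $\|L(x)\|^2=(1+\epsilon_x)\|x\|^2$ with $\epsilon_x\in(-\epsilon,\epsilon)$ for every $x\in S$. *)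

theory Defs
  imports Complex_Main
begin

(* A tensor of shape ns = [n_1,...,n_d] is a function on index lists, zero outside
   the index set; a vector in C^N is a function nat => complex zero outside {..<N}. *)

definition tindices :: "nat list \<Rightarrow> nat list set" where
  "tindices ns = {is. length is = length ns \<and> (\<forall>k<length ns. is ! k < ns ! k)}"

definition tensors :: "nat list \<Rightarrow> (nat list \<Rightarrow> complex) set" where
  "tensors ns = {X. \<forall>is. is \<notin> tindices ns \<longrightarrow> X is = 0}"

definition tinner :: "nat list \<Rightarrow> (nat list \<Rightarrow> complex) \<Rightarrow> (nat list \<Rightarrow> complex) \<Rightarrow> complex" where
  "tinner ns X Y = (\<Sum>is\<in>tindices ns. X is * cnj (Y is))"

definition tnorm :: "nat list \<Rightarrow> (nat list \<Rightarrow> complex) \<Rightarrow> real" where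
  "tnorm ns X = sqrt (\<Sum>is\<in>tindices ns. (cmod (X is))\<^sup>2)"

definition vecs :: "nat \<Rightarrow> (nat \<Rightarrow> complex) set" where
  "vecs N = {v. \<forall>j. N \<le> j \<longrightarrow> v j = 0}"

definition vnorm :: "nat \<Rightarrow> (nat \<Rightarrow> complex) \<Rightarrow> real" where
  "vnorm N v = sqrt (\<Sum>j<N. (cmod (v j))\<^sup>2)"

definition tspan :: "nat \<Rightarrow> (nat \<Rightarrow> (nat list \<Rightarrow> complex)) \<Rightarrow> (nat list \<Rightarrow> complex) set" where
  "tspan r T = {\<lambda>is. \<Sum>k<r. c k * T k is | c. True}"

definition vspan :: "nat \<Rightarrow> (nat \<Rightarrow> (nat \<Rightarrow> complex)) \<Rightarrow> (nat \<Rightarrow> complex) set" where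
  "vspan q V = {\<lambda>j. \<Sum>k<q. c k * V k j | c. True}"

definition proj_perp :: "nat list \<Rightarrow> (nat list \<Rightarrow> complex) set \<Rightarrow> (nat list \<Rightarrow> complex) \<Rightarrow> (nat list \<Rightarrow> complex)" where
  "proj_perp ns S X = (THE Z. Z \<in> tensors ns \<and> (\<forall>Y\<in>S. tinner ns Z Y = 0) \<and> (\<lambda>is. X is - Z is) \<in> S)"

definition tlinear :: "nat list \<Rightarrow> nat list \<Rightarrow> ((nat list \<Rightarrow> complex) \<Rightarrow> (nat list \<Rightarrow> complex)) \<Rightarrow> bool" where
  "tlinear ns ms L \<longleftrightarrow> (\<forall>X\<in>tensors ns. L X \<in> tensors ms) \<and>
     (\<forall>X\<in>tensors ns. \<forall>Y\<in>tensors ns. L (\<lambda>is. X is + Y is) = (\<lambda>is. L X is + L Y is)) \<and>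
     (\<forall>X\<in>tensors ns. \<forall>c. L (\<lambda>is. c * X is) = (\<lambda>is. c * L X is))"

definition tJL :: "nat list \<Rightarrow> nat list \<Rightarrow> ((nat list \<Rightarrow> complex) \<Rightarrow> (nat list \<Rightarrow> complex)) \<Rightarrow> real \<Rightarrow> (nat list \<Rightarrow> complex) set \<Rightarrow> bool" where
  "tJL ns ms L eps S \<longleftrightarrow> (\<forall>X\<in>S. \<exists>e. e \<in> {-eps<..<eps} \<and> (tnorm ms (L X))\<^sup>2 = (1 + e) * (tnorm ns X)\<^sup>2)"

definition reshaping :: "nat list \<Rightarrow> (nat list \<Rightarrow> nat) \<Rightarrow> bool" where
  "reshaping ms idx \<longleftrightarrow> bij_betw idx (tindices ms) {..<prod_list ms}"

definition vect :: "nat list \<Rightarrow> (nat list \<Rightarrow> nat) \<Rightarrow> (nat list \<Rightarrow> complex) \<Rightarrow> (nat \<Rightarrow> complex)" where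
  "vect ms idx Y = (\<lambda>j. if j < prod_list ms then Y (inv_into (tindices ms) idx j) else 0)"

definition mat_app :: "nat \<Rightarrow> nat \<Rightarrow> (nat \<Rightarrow> nat \<Rightarrow> complex) \<Rightarrow> (nat \<Rightarrow> complex) \<Rightarrow> (nat \<Rightarrow> complex)" where
  "mat_app m N A v = (\<lambda>i. if i < m then (\<Sum>j<N. A i j * v j) else 0)"

definition mJL :: "nat \<Rightarrow> nat \<Rightarrow> (nat \<Rightarrow> nat \<Rightarrow> complex) \<Rightarrow> real \<Rightarrow> (nat \<Rightarrow> complex) set \<Rightarrow> bool" where
  "mJL m N A eps S \<longleftrightarrow> (\<forall>v\<in>S. \<exists>e. e \<in> {-eps<..<eps} \<and> (vnorm m (mat_app m N A v))\<^sup>2 = (1 + e) * (vnorm N v)\<^sup>2)"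

end

theory Submission
  imports Defs
begin

(* Write X - Y = Pp + W with Pp the component of X orthogonal to the span and W in the span.
   Then |L (X - Y)|^2 = |L Pp|^2 + |L W|^2 + 2 Re <L Pp, L W>, and the first two terms are
   distorted by at most eps/6.  Polarization over P +- T_k and P +- i T_k turns the JL property
   of these 4r tensors into |<L P, L T_k>| <= eps / (12 sqrt r); summing against the coordinates
   of W and using 2 a b <= a^2 + b^2 gives |2 Re <L Pp, L W>| <= eps/12 (|Pp|^2 + |W|^2).
   Hence L distorts |X - Y|^2 by at most eps/4.  Finally vect (L (X - Y)) lies in the span on
   which A is an eps/3-embedding, and eps/4 + eps/3 + eps^2/12 <= eps. *)

definition torthonormal :: "nat list \<Rightarrow> nat \<Rightarrow> (nat \<Rightarrow> nat list \<Rightarrow> complex) \<Rightarrow> bool" where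
  "torthonormal ns r T \<longleftrightarrow> (\<forall>k<r. T k \<in> tensors ns) \<and>
     (\<forall>j<r. \<forall>k<r. tinner ns (T j) (T k) = (if j = k then 1 else 0))"

lemma torthonormal_tensors: "torthonormal ns r T \<Longrightarrow> k \<in> {..<r} \<Longrightarrow> T k \<in> tensors ns"
  unfolding torthonormal_def by blast

lemma finite_tindices: "finite (tindices ns)"
proof (rule finite_subset)
  show "tindices ns \<subseteq> {xs. set xs \<subseteq> {..<sum_list ns} \<and> length xs = length ns}"
    unfolding tindices_def
    by (auto simp: in_set_conv_nth) (meson elem_le_sum_list order_less_le_trans)
  show "finite {xs. set xs \<subseteq> {..<sum_list ns} \<and> length xs = length ns}"
    by (rule finite_lists_length_eq) auto
qed

lemma tensors_sum:
  "(\<And>k. k \<in> K \<Longrightarrow> V k \<in> tensors ns) \<Longrightarrow> (\<lambda>i. \<Sum>k\<in>K. d k * V k i) \<in> tensors ns"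
  unfolding tensors_def by auto

lemma tensors_diff: "U \<in> tensors ns \<Longrightarrow> V \<in> tensors ns \<Longrightarrow> (\<lambda>i. U i - V i) \<in> tensors ns"
  unfolding tensors_def by auto

lemma tensors_mult: "U \<in> tensors ns \<Longrightarrow> (\<lambda>i. c * U i) \<in> tensors ns"
  unfolding tensors_def by auto

lemma tnorm_nonneg: "tnorm ns X \<ge> 0"
  unfolding tnorm_def by (simp add: sum_nonneg)

lemma power2_tnorm: "(tnorm ns X)\<^sup>2 = (\<Sum>i\<in>tindices ns. (cmod (X i))\<^sup>2)"
  unfolding tnorm_def by (simp add: sum_nonneg)

lemma tinner_self: "tinner ns X X = complex_of_real ((tnorm ns X)\<^sup>2)"
  unfolding tinner_def power2_tnorm by (simp only: of_real_sum complex_norm_square)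

lemma tnorm_mult: "tnorm ns (\<lambda>i. c * U i) = cmod c * tnorm ns U"
  unfolding tnorm_def norm_mult power_mult_distrib
  by (simp add: sum_distrib_left[symmetric] real_sqrt_mult)

lemma tnorm_add_mult:
  "(tnorm ns (\<lambda>i. U i + c * V i))\<^sup>2 =
     (tnorm ns U)\<^sup>2 + (cmod c)\<^sup>2 * (tnorm ns V)\<^sup>2 + 2 * Re (cnj c * tinner ns U V)"
proof -
  have "(cmod (u + c * v))\<^sup>2 = (cmod u)\<^sup>2 + (cmod c)\<^sup>2 * (cmod v)\<^sup>2 + 2 * Re (cnj c * (u * cnj v))"
    for u v
    unfolding cmod_power2 by (simp add: power2_eq_square algebra_simps)
  then show ?thesis
    unfolding power2_tnorm tinner_def by (simp add: sum.distrib sum_distrib_left Re_sum)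
qed

lemma tnorm_eq_0_imp_zero:
  assumes "X \<in> tensors ns" "tnorm ns X = 0"
  shows "X = (\<lambda>_. 0)"
proof
  fix i
  have "(\<Sum>i\<in>tindices ns. (cmod (X i))\<^sup>2) = 0"
    using assms(2) power2_tnorm[of ns X] by simp
  then have "\<forall>i\<in>tindices ns. X i = 0"
    by (simp add: sum_nonneg_eq_0_iff[OF finite_tindices])
  then show "X i = 0"
    using assms(1) unfolding tensors_def by (cases "i \<in> tindices ns") auto
qed

lemma tinner_diff_left: "tinner ns (\<lambda>i. U i - V i) Z = tinner ns U Z - tinner ns V Z"
  unfolding tinner_def by (simp add: left_diff_distrib sum_subtractf)

lemma tinner_mult_left: "tinner ns (\<lambda>i. c * U i) Z = c * tinner ns U Z"
  unfolding tinner_def by (simp add: sum_distrib_left mult_ac)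

lemma tinner_sum_left:
  "tinner ns (\<lambda>i. \<Sum>k\<in>K. d k * V k i) Z = (\<Sum>k\<in>K. d k * tinner ns (V k) Z)"
  unfolding tinner_def by (simp add: sum_distrib_left sum_distrib_right mult_ac sum.swap[of _ K])

lemma tinner_sum_right:
  "tinner ns U (\<lambda>i. \<Sum>k\<in>K. d k * V k i) = (\<Sum>k\<in>K. cnj (d k) * tinner ns U (V k))"
  unfolding tinner_def by (simp add: sum_distrib_left sum_distrib_right mult_ac sum.swap[of _ K])

lemma tnorm_orthonormal_unit:
  assumes "torthonormal ns r T" "k < r"
  shows "tnorm ns (T k) = 1"
proof -
  have "complex_of_real ((tnorm ns (T k))\<^sup>2) = 1"
    using assms unfolding torthonormal_def tinner_self[symmetric] by simp
  then have "(tnorm ns (T k))\<^sup>2 = 1"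
    by (simp only: of_real_eq_1_iff)
  then show ?thesis
    using tnorm_nonneg[of ns "T k"] by (auto simp: power2_eq_1_iff)
qed

lemma tinner_orthonormal_sum_left:
  assumes "torthonormal ns r T" "j < r"
  shows "tinner ns (\<lambda>i. \<Sum>k<r. d k * T k i) (T j) = d j"
proof -
  have "(\<Sum>k<r. d k * tinner ns (T k) (T j)) = (\<Sum>k<r. if k = j then d k else 0)"
    using assms unfolding torthonormal_def by (intro sum.cong) auto
  then show ?thesis
    using assms(2) unfolding tinner_sum_left by simp
qed

lemma tnorm_orthonormal_sum:
  assumes "torthonormal ns r T"
  shows "(tnorm ns (\<lambda>i. \<Sum>k<r. d k * T k i))\<^sup>2 = (\<Sum>k<r. (cmod (d k))\<^sup>2)"
proof -
  have "complex_of_real ((tnorm ns (\<lambda>i. \<Sum>k<r. d k * T k i))\<^sup>2) = (\<Sum>k<r. cnj (d k) * d k)"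
    unfolding tinner_self[symmetric]
    by (simp add: tinner_sum_right tinner_orthonormal_sum_left[OF assms])
  also have "\<dots> = complex_of_real (\<Sum>k<r. (cmod (d k))\<^sup>2)"
    by (simp only: of_real_sum complex_norm_square mult.commute)
  finally show ?thesis
    by (simp only: of_real_eq_iff)
qed

lemma proj_perp_eqI:
  assumes Q: "Q \<in> tensors ns" "\<forall>Y\<in>tspan r T. tinner ns Q Y = 0" "(\<lambda>i. X i - Q i) \<in> tspan r T"
  shows "proj_perp ns (tspan r T) X = Q"
  unfolding proj_perp_def
proof (rule the_equality)
  show "Q \<in> tensors ns \<and> (\<forall>Y\<in>tspan r T. tinner ns Q Y = 0) \<and> (\<lambda>i. X i - Q i) \<in> tspan r T"
    using Q by blast
next
  fix Z
  assume Z: "Z \<in> tensors ns \<and> (\<forall>Y\<in>tspan r T. tinner ns Z Y = 0) \<and> (\<lambda>i. X i - Z i) \<in> tspan r T"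
  then obtain b where b: "(\<lambda>i. X i - Z i) = (\<lambda>i. \<Sum>k<r. b k * T k i)"
    unfolding tspan_def by auto
  obtain c where c: "(\<lambda>i. X i - Q i) = (\<lambda>i. \<Sum>k<r. c k * T k i)"
    using Q(3) unfolding tspan_def by auto
  define D where "D = (\<lambda>i. Z i - Q i)"
  have "D i = (\<Sum>k<r. (c k - b k) * T k i)" for i
  proof -
    have "D i = (X i - Q i) - (X i - Z i)"
      unfolding D_def by simp
    also have "\<dots> = (\<Sum>k<r. c k * T k i) - (\<Sum>k<r. b k * T k i)"
      using fun_cong[OF b, of i] fun_cong[OF c, of i] by simp
    finally show ?thesis
      by (simp add: left_diff_distrib sum_subtractf)
  qed
  then have "D \<in> tspan r T"
    unfolding tspan_def by (intro CollectI exI[of _ "\<lambda>k. c k - b k"]) auto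
  then have "tinner ns Z D = 0" "tinner ns Q D = 0"
    using Z Q(2) by blast+
  moreover have "tinner ns D D = tinner ns Z D - tinner ns Q D"
    using tinner_diff_left[of ns Z Q D] by (simp only: D_def[symmetric])
  moreover have "D \<in> tensors ns"
    unfolding D_def using Z Q(1) by (intro tensors_diff) auto
  ultimately have "D = (\<lambda>_. 0)"
    by (intro tnorm_eq_0_imp_zero) (auto simp: tinner_self)
  then show "Z = Q"
    unfolding D_def by (simp add: fun_eq_iff)
qed

lemma proj_perp_orthonormal:
  assumes T: "torthonormal ns r T" and X: "X \<in> tensors ns"
  shows "proj_perp ns (tspan r T) X = (\<lambda>i. X i - (\<Sum>k<r. tinner ns X (T k) * T k i))"
    (is "_ = ?Q")
proof (rule proj_perp_eqI)
  show "?Q \<in> tensors ns"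
    using torthonormal_tensors[OF T] by (intro tensors_diff X tensors_sum)
  have "tinner ns ?Q (T j) = 0" if "j < r" for j
    using that by (simp add: tinner_diff_left tinner_orthonormal_sum_left[OF T])
  then show "\<forall>Y\<in>tspan r T. tinner ns ?Q Y = 0"
    unfolding tspan_def by (auto simp: tinner_sum_right)
  show "(\<lambda>i. X i - ?Q i) \<in> tspan r T"
    unfolding tspan_def by (intro CollectI exI[of _ "\<lambda>k. tinner ns X (T k)"]) simp
qed

lemma proj_perp_orthonormal_in_tensors:
  assumes "torthonormal ns r T" "X \<in> tensors ns"
  shows "proj_perp ns (tspan r T) X \<in> tensors ns"
  unfolding proj_perp_orthonormal[OF assms]
  using assms torthonormal_tensors by (intro tensors_diff tensors_sum)

lemma tinner_proj_perp_orthonormal: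
  assumes "torthonormal ns r T" "X \<in> tensors ns" "k < r"
  shows "tinner ns (proj_perp ns (tspan r T) X) (T k) = 0"
  using assms
  by (simp add: proj_perp_orthonormal tinner_diff_left tinner_orthonormal_sum_left[OF assms(1,3)])

lemma proj_perp_orthonormal_diff:
  assumes "torthonormal ns r T" "X \<in> tensors ns" "Y \<in> tspan r T"
  obtains d where "(\<lambda>i. X i - Y i) = (\<lambda>i. proj_perp ns (tspan r T) X i + (\<Sum>k<r. d k * T k i))"
proof -
  obtain c where "Y = (\<lambda>i. \<Sum>k<r. c k * T k i)"
    using assms(3) unfolding tspan_def by auto
  then have "(\<lambda>i. X i - Y i) = (\<lambda>i. proj_perp ns (tspan r T) X i
      + (\<Sum>k<r. (tinner ns X (T k) - c k) * T k i))"
    using assms(1,2) by (simp add: proj_perp_orthonormal left_diff_distrib sum_subtractf)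
  then show thesis ..
qed

lemma tlinear_mult: "tlinear ns ms L \<Longrightarrow> U \<in> tensors ns \<Longrightarrow> L (\<lambda>i. c * U i) = (\<lambda>i. c * L U i)"
  unfolding tlinear_def by blast

lemma tlinear_add:
  "tlinear ns ms L \<Longrightarrow> U \<in> tensors ns \<Longrightarrow> V \<in> tensors ns \<Longrightarrow>
     L (\<lambda>i. U i + V i) = (\<lambda>i. L U i + L V i)"
  unfolding tlinear_def by blast

lemma tlinear_add_mult:
  assumes "tlinear ns ms L" "U \<in> tensors ns" "V \<in> tensors ns"
  shows "L (\<lambda>i. U i + c * V i) = (\<lambda>i. L U i + c * L V i)"
  using tlinear_add[OF assms(1,2) tensors_mult[OF assms(3)]] tlinear_mult[OF assms(1,3)] by simp

lemma tlinear_zero: "tlinear ns ms L \<Longrightarrow> L (\<lambda>_. 0) = (\<lambda>_. 0)"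
  using tlinear_mult[of ns ms L "\<lambda>_. 0" 0] unfolding tensors_def by simp

lemma tlinear_sum:
  assumes "tlinear ns ms L" "finite K" "\<And>k. k \<in> K \<Longrightarrow> V k \<in> tensors ns"
  shows "L (\<lambda>i. \<Sum>k\<in>K. d k * V k i) = (\<lambda>i. \<Sum>k\<in>K. d k * L (V k) i)"
  using assms(2,3)
proof (induction K rule: finite_induct)
  case empty
  then show ?case
    using tlinear_zero[OF assms(1)] by simp
next
  case (insert x F)
  have "(\<lambda>i. \<Sum>k\<in>F. d k * V k i) \<in> tensors ns"
    using insert by (intro tensors_sum) auto
  then show ?case
    using insert tlinear_add_mult[OF assms(1), of "\<lambda>i. \<Sum>k\<in>F. d k * V k i" "V x" "d x"]
    by (simp add: add.commute)
qed

lemma vnorm_vect: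
  assumes "reshaping ms idx"
  shows "vnorm (prod_list ms) (vect ms idx Y) = tnorm ms Y"
proof -
  have b: "bij_betw idx (tindices ms) {..<prod_list ms}"
    using assms unfolding reshaping_def .
  have "(\<Sum>j<prod_list ms. (cmod (vect ms idx Y j))\<^sup>2) = (\<Sum>i\<in>tindices ms. (cmod (vect ms idx Y (idx i)))\<^sup>2)"
    using sum.reindex_bij_betw[OF b, of "\<lambda>j. (cmod (vect ms idx Y j))\<^sup>2"] by simp
  also have "\<dots> = (\<Sum>i\<in>tindices ms. (cmod (Y i))\<^sup>2)"
    using bij_betw_apply[OF b] bij_betw_inv_into_left[OF b]
    by (intro sum.cong) (auto simp: vect_def)
  finally show ?thesis
    unfolding vnorm_def tnorm_def by simp
qed

lemma vect_tlinear_diff_in_vspan: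
  assumes T: "torthonormal ns r T" and X: "X \<in> tensors ns" and L: "tlinear ns ms L"
    and Y: "Y \<in> tspan r T"
  shows "vect ms idx (L (\<lambda>i. X i - Y i)) \<in> vspan (Suc r)
    (\<lambda>k. if k = 0 then vect ms idx (L (proj_perp ns (tspan r T) X)) else vect ms idx (L (T (k - 1))))"
    (is "_ \<in> vspan _ ?V")
proof -
  define Pp where "Pp = proj_perp ns (tspan r T) X"
  obtain d where XY: "(\<lambda>i. X i - Y i) = (\<lambda>i. Pp i + (\<Sum>k<r. d k * T k i))"
    using proj_perp_orthonormal_diff[OF T X Y] unfolding Pp_def by blast
  note T_in = torthonormal_tensors[OF T]
  have Pp_in: "Pp \<in> tensors ns"
    unfolding Pp_def using T X by (rule proj_perp_orthonormal_in_tensors)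
  have W_in: "(\<lambda>i. \<Sum>k<r. d k * T k i) \<in> tensors ns"
    using T_in by (rule tensors_sum)
  have "L (\<lambda>i. \<Sum>k<r. d k * T k i) = (\<lambda>i. \<Sum>k<r. d k * L (T k) i)"
    using L finite_lessThan T_in by (rule tlinear_sum)
  then have LXY: "L (\<lambda>i. X i - Y i) = (\<lambda>i. L Pp i + (\<Sum>k<r. d k * L (T k) i))"
    unfolding XY tlinear_add[OF L Pp_in W_in] by simp
  have "vect ms idx (L (\<lambda>i. X i - Y i)) j = (\<Sum>k<Suc r. case_nat 1 d k * ?V k j)" for j
    unfolding sum.lessThan_Suc_shift vect_def LXY Pp_def[symmetric] by (simp add: sum_distrib_left)
  then show ?thesis
    unfolding vspan_def by (intro CollectI exI[of _ "case_nat 1 d"]) (simp add: fun_eq_iff)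
qed

lemma tJL_D:
  "tJL ns ms L eps S \<Longrightarrow> U \<in> S \<Longrightarrow>
     \<exists>e. \<bar>e\<bar> < eps \<and> (tnorm ms (L U))\<^sup>2 = (1 + e) * (tnorm ns U)\<^sup>2"
  unfolding tJL_def by (fastforce simp: abs_less_iff)

lemma mJL_D:
  "mJL m N A eps S \<Longrightarrow> v \<in> S \<Longrightarrow>
     \<exists>e. \<bar>e\<bar> < eps \<and> (vnorm m (mat_app m N A v))\<^sup>2 = (1 + e) * (vnorm N v)\<^sup>2"
  unfolding mJL_def by (fastforce simp: abs_less_iff)

lemma cmod_tinner_le_polarization:
  assumes "\<And>c. c \<in> {1, -1, \<i>, -\<i>} \<Longrightarrow> \<bar>(tnorm ns (\<lambda>i. U i + c * V i))\<^sup>2 - s\<bar> \<le> t"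
  shows "cmod (tinner ns U V) \<le> t"
proof -
  define z where "z = tinner ns U V"
  have expand: "(tnorm ns (\<lambda>i. U i + c * V i))\<^sup>2 =
      (tnorm ns U)\<^sup>2 + (tnorm ns V)\<^sup>2 + 2 * Re (cnj c * z)" if "cmod c = 1" for c
    using that unfolding z_def tnorm_add_mult by simp
  have "\<bar>Re z\<bar> \<le> t / 2"
    using assms[of 1] assms[of "-1"] expand[of 1] expand[of "-1"] by simp
  moreover have "\<bar>Im z\<bar> \<le> t / 2"
    using assms[of \<i>] assms[of "-\<i>"] expand[of \<i>] expand[of "-\<i>"] by simp
  ultimately show ?thesis
    using cmod_le[of z] unfolding z_def by linarith
qed

lemma tJL_tinner_le:
  assumes L: "tlinear ns ms L" and JL: "tJL ns ms L \<delta> S"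
    and U: "U \<in> tensors ns" "tnorm ns U = 1" and V: "V \<in> tensors ns" "tnorm ns V = 1"
    and UV: "tinner ns U V = 0"
    and S: "\<And>c. c \<in> {1, -1, \<i>, -\<i>} \<Longrightarrow> (\<lambda>i. U i + c * V i) \<in> S"
  shows "cmod (tinner ms (L U) (L V)) \<le> 2 * \<delta>"
proof (rule cmod_tinner_le_polarization)
  fix c :: complex
  assume c: "c \<in> {1, -1, \<i>, -\<i>}"
  obtain e where e: "\<bar>e\<bar> < \<delta>"
    "(tnorm ms (L (\<lambda>i. U i + c * V i)))\<^sup>2 = (1 + e) * (tnorm ns (\<lambda>i. U i + c * V i))\<^sup>2"
    using tJL_D[OF JL S[OF c]] by blast
  have "cmod c = 1"
    using c by auto
  then have "(tnorm ns (\<lambda>i. U i + c * V i))\<^sup>2 = 2"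
    by (simp add: tnorm_add_mult U V UV)
  then show "\<bar>(tnorm ms (\<lambda>i. L U i + c * L V i))\<^sup>2 - 2\<bar> \<le> 2 * \<delta>"
    using e tlinear_add_mult[OF L U(1) V(1)] by simp
qed

lemma tJL_tinner_tspan_le:
  assumes L: "tlinear ns ms L" and T: "torthonormal ns r T" and JL: "tJL ns ms L \<delta> S"
    and U: "U \<in> tensors ns" "tnorm ns U = 1" "\<And>k. k < r \<Longrightarrow> tinner ns U (T k) = 0"
    and S: "\<And>k c. k < r \<Longrightarrow> c \<in> {1, -1, \<i>, -\<i>} \<Longrightarrow> (\<lambda>i. U i + c * T k i) \<in> S"
  shows "cmod (tinner ms (L U) (L (\<lambda>i. \<Sum>k<r. d k * T k i))) \<le> 2 * \<delta> * (\<Sum>k<r. cmod (d k))"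
proof -
  note T_in = torthonormal_tensors[OF T]
  have "cmod (tinner ms (L U) (L (\<lambda>i. \<Sum>k<r. d k * T k i)))
      = cmod (\<Sum>k<r. cnj (d k) * tinner ms (L U) (L (T k)))"
    by (simp only: tlinear_sum[OF L finite_lessThan T_in] tinner_sum_right)
  also have "\<dots> \<le> (\<Sum>k<r. cmod (d k) * (2 * \<delta>))"
    using tJL_tinner_le[OF L JL U(1,2) _ _ U(3) S] T_in tnorm_orthonormal_unit[OF T]
    by (intro order_trans[OF norm_sum sum_mono]) (auto simp: norm_mult intro!: mult_left_mono)
  finally show ?thesis
    by (simp add: sum_distrib_left mult_ac)
qed

lemma two_mult_sum_le_power2_add_sum_power2:
  fixes x :: real and a :: "nat \<Rightarrow> real"
  shows "2 * x / sqrt (real r) * (\<Sum>k<r. a k) \<le> x\<^sup>2 + (\<Sum>k<r. (a k)\<^sup>2)"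
proof (cases "r = 0")
  case False
  have "2 * x / sqrt (real r) * (\<Sum>k<r. a k) = (\<Sum>k<r. 2 * (x / sqrt (real r)) * a k)"
    by (simp add: sum_distrib_left)
  also have "\<dots> \<le> (\<Sum>k<r. (x / sqrt (real r))\<^sup>2 + (a k)\<^sup>2)"
    by (intro sum_mono sum_squares_bound)
  also have "\<dots> = x\<^sup>2 + (\<Sum>k<r. (a k)\<^sup>2)"
    using False by (simp add: sum.distrib power_divide)
  finally show ?thesis .
qed simp

lemma abs_mult_distortion_le:
  fixes M N b \<alpha> \<beta> :: real
  assumes "\<bar>M - N\<bar> \<le> \<alpha> * N" "\<bar>b\<bar> \<le> \<beta>" "0 \<le> N"
  shows "\<bar>(1 + b) * M - N\<bar> \<le> (\<alpha> + \<beta> + \<alpha> * \<beta>) * N"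
proof -
  have "\<bar>M\<bar> \<le> (1 + \<alpha>) * N"
    using assms(1,3) by (auto simp: abs_le_iff algebra_simps)
  then have "\<bar>b * M\<bar> \<le> \<beta> * ((1 + \<alpha>) * N)"
    unfolding abs_mult using assms(2) by (intro mult_mono) auto
  then show ?thesis
    using assms(1) abs_triangle_ineq[of "M - N" "b * M"] by (simp add: algebra_simps)
qed


lemma tJL_distortion_diff_tspan:
  fixes ns :: "nat list" and r :: nat and T :: "nat \<Rightarrow> nat list \<Rightarrow> complex"
    and X :: "nat list \<Rightarrow> complex" and \<epsilon> :: real
  defines "Pp \<equiv> proj_perp ns (tspan r T) X"
  defines "P \<equiv> (\<lambda>is. Pp is / complex_of_real (tnorm ns Pp))"
  assumes T: "torthonormal ns r T" and X: "X \<in> tensors ns" and eps: "0 \<le> \<epsilon>"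
    and L: "tlinear ns ms L"
    and JL1: "tJL ns ms L (\<epsilon> / 6) (tspan r T \<union> {Pp})"
    and JL2: "tJL ns ms L (\<epsilon> / (24 * sqrt (real r))) S"
    and S: "\<And>k c. k < r \<Longrightarrow> c \<in> {1, -1, \<i>, -\<i>} \<Longrightarrow> (\<lambda>i. P i + c * T k i) \<in> S"
    and Y: "Y \<in> tspan r T"
  shows "\<bar>(tnorm ms (L (\<lambda>i. X i - Y i)))\<^sup>2 - (tnorm ns (\<lambda>i. X i - Y i))\<^sup>2\<bar>
           \<le> \<epsilon> / 4 * (tnorm ns (\<lambda>i. X i - Y i))\<^sup>2"
proof -
  obtain d where XY: "(\<lambda>i. X i - Y i) = (\<lambda>i. Pp i + (\<Sum>k<r. d k * T k i))"
    using proj_perp_orthonormal_diff[OF T X Y] unfolding Pp_def by blast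
  define W where "W = (\<lambda>i. \<Sum>k<r. d k * T k i)"
  have XYW: "(\<lambda>i. X i - Y i) = (\<lambda>i. Pp i + 1 * W i)"
    unfolding XY W_def by simp
  define p where "p = tnorm ns Pp"
  define w where "w = tnorm ns W"
  note T_in = torthonormal_tensors[OF T]
  have Pp_in: "Pp \<in> tensors ns"
    unfolding Pp_def using T X by (rule proj_perp_orthonormal_in_tensors)
  have W_in: "W \<in> tensors ns"
    unfolding W_def using T_in by (rule tensors_sum)
  have Pp_T: "tinner ns Pp (T k) = 0" if "k < r" for k
    unfolding Pp_def using T X that by (rule tinner_proj_perp_orthonormal)
  have N: "(tnorm ns (\<lambda>i. X i - Y i))\<^sup>2 = p\<^sup>2 + w\<^sup>2"
    unfolding XYW tnorm_add_mult p_def w_def by (simp add: W_def tinner_sum_right Pp_T)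
  define C where "C = tinner ms (L Pp) (L W)"
  define \<delta> where "\<delta> = \<epsilon> / (24 * sqrt (real r))"
  have M: "(tnorm ms (L (\<lambda>i. X i - Y i)))\<^sup>2 = (tnorm ms (L Pp))\<^sup>2 + (tnorm ms (L W))\<^sup>2 + 2 * Re C"
    unfolding XYW tlinear_add_mult[OF L Pp_in W_in] tnorm_add_mult C_def by simp
  obtain a1 where a1: "\<bar>a1\<bar> < \<epsilon> / 6" "(tnorm ms (L Pp))\<^sup>2 = (1 + a1) * p\<^sup>2"
    using tJL_D[OF JL1, of Pp] unfolding p_def by auto
  obtain a2 where a2: "\<bar>a2\<bar> < \<epsilon> / 6" "(tnorm ms (L W))\<^sup>2 = (1 + a2) * w\<^sup>2"
    using tJL_D[OF JL1, of W] unfolding w_def W_def tspan_def by auto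
  have "cmod C \<le> p * (2 * \<delta> * (\<Sum>k<r. cmod (d k)))"
  proof (cases "p = 0")
    \<comment> \<open>Here P is the junk value Pp / 0 = 0, so JL2 says nothing, but Pp itself vanishes.\<close>
    case True
    then have "L Pp = (\<lambda>_. 0)"
      using tnorm_eq_0_imp_zero[OF Pp_in] tlinear_zero[OF L] unfolding p_def by simp
    then show ?thesis
      using True unfolding C_def tinner_def by simp
  next
    case False
    then have p: "p > 0"
      using tnorm_nonneg unfolding p_def by (metis less_eq_real_def)
    have Pp_P: "Pp = (\<lambda>i. complex_of_real p * P i)"
      using p unfolding P_def p_def by auto
    have P_in: "P \<in> tensors ns"
      unfolding P_def using tensors_mult[OF Pp_in, of "inverse (complex_of_real p)"]
      by (simp add: p_def field_simps)
    have "tnorm ns Pp = p * tnorm ns P"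
      using tnorm_mult[of ns "complex_of_real p" P] p unfolding Pp_P[symmetric] by simp
    then have "tnorm ns P = 1"
      using p unfolding p_def by simp
    moreover have "tinner ns P (T k) = 0" if "k < r" for k
      using Pp_T[OF that] p unfolding Pp_P tinner_mult_left by simp
    ultimately have "cmod (tinner ms (L P) (L W)) \<le> 2 * \<delta> * (\<Sum>k<r. cmod (d k))"
      unfolding W_def \<delta>_def by (intro tJL_tinner_tspan_le[OF L T JL2 P_in] S)
    moreover have "C = complex_of_real p * tinner ms (L P) (L W)"
      unfolding C_def Pp_P tlinear_mult[OF L P_in] tinner_mult_left ..
    ultimately show ?thesis
      using p by (simp add: norm_mult mult_left_mono)
  qed
  also have "\<dots> = \<epsilon> / 24 * (2 * p / sqrt (real r) * (\<Sum>k<r. cmod (d k)))"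
    by (simp add: \<delta>_def field_simps)
  also have "\<dots> \<le> \<epsilon> / 24 * (p\<^sup>2 + w\<^sup>2)"
    using two_mult_sum_le_power2_add_sum_power2[of p r "\<lambda>k. cmod (d k)"] eps
    by (intro mult_left_mono) (simp_all add: w_def W_def tnorm_orthonormal_sum[OF T])
  finally have "\<bar>2 * Re C\<bar> \<le> \<epsilon> / 12 * (p\<^sup>2 + w\<^sup>2)"
    using abs_Re_le_cmod[of C] by linarith
  moreover have "\<bar>a1 * p\<^sup>2\<bar> \<le> \<epsilon> / 6 * p\<^sup>2"
    using a1(1) unfolding abs_mult abs_power2 by (intro mult_right_mono) auto
  moreover have "\<bar>a2 * w\<^sup>2\<bar> \<le> \<epsilon> / 6 * w\<^sup>2"
    using a2(1) unfolding abs_mult abs_power2 by (intro mult_right_mono) auto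
  ultimately show ?thesis
    unfolding M N a1(2) a2(2) abs_le_iff by (simp add: algebra_simps)
qed

theorem theorem5:
  fixes ns ms :: "nat list" and r m :: nat
    and X :: "nat list \<Rightarrow> complex"
    and T :: "nat \<Rightarrow> nat list \<Rightarrow> complex"
    and L :: "(nat list \<Rightarrow> complex) \<Rightarrow> (nat list \<Rightarrow> complex)"
    and idx :: "nat list \<Rightarrow> nat"
    and A :: "nat \<Rightarrow> nat \<Rightarrow> complex"
    and \<epsilon> :: real
  defines "Lsp \<equiv> tspan r T"
    and "Pp \<equiv> proj_perp ns (tspan r T) X"
  defines "P \<equiv> (\<lambda>is. Pp is / complex_of_real (tnorm ns Pp))"
  assumes X: "X \<in> tensors ns"
    and T_in: "\<And>k. k < r \<Longrightarrow> T k \<in> tensors ns"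
    and T_orthonormal: "\<And>j k. j < r \<Longrightarrow> k < r \<Longrightarrow> tinner ns (T j) (T k) = (if j = k then 1 else 0)"
    and eps: "0 < \<epsilon>" "\<epsilon> < 1"
    and L_lin: "tlinear ns ms L"
    and JL1: "tJL ns ms L (\<epsilon> / 6) (Lsp \<union> {Pp})"
    and JL2: "tJL ns ms L (\<epsilon> / (24 * sqrt (real r)))
               (\<Union>k\<in>{..<r}. {(\<lambda>is. P is - T k is), (\<lambda>is. P is + T k is),
                             (\<lambda>is. P is - \<i> * T k is), (\<lambda>is. P is + \<i> * T k is)})"
    and vect: "reshaping ms idx"
    and A_JL: "mJL m (prod_list ms) A (\<epsilon> / 3)
               (vspan (Suc r) (\<lambda>k. if k = 0 then vect ms idx (L Pp) else vect ms idx (L (T (k - 1)))))"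
  shows "\<forall>Y\<in>Lsp.
     \<bar>(vnorm m (mat_app m (prod_list ms) A (vect ms idx (L (\<lambda>is. X is - Y is)))))\<^sup>2
        - (tnorm ns (\<lambda>is. X is - Y is))\<^sup>2\<bar>
     \<le> \<epsilon> * (tnorm ns (\<lambda>is. X is - Y is))\<^sup>2"
proof
  fix Y
  assume Y: "Y \<in> Lsp"
  have T: "torthonormal ns r T"
    using T_in T_orthonormal unfolding torthonormal_def by blast
  have S: "\<And>k c. k < r \<Longrightarrow> c \<in> {1, -1, \<i>, -\<i>} \<Longrightarrow> (\<lambda>i. P i + c * T k i) \<in>
      (\<Union>k\<in>{..<r}. {(\<lambda>is. P is - T k is), (\<lambda>is. P is + T k is),
                     (\<lambda>is. P is - \<i> * T k is), (\<lambda>is. P is + \<i> * T k is)})"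
    by auto
  have dist: "\<bar>(tnorm ms (L (\<lambda>i. X i - Y i)))\<^sup>2 - (tnorm ns (\<lambda>i. X i - Y i))\<^sup>2\<bar>
      \<le> \<epsilon> / 4 * (tnorm ns (\<lambda>i. X i - Y i))\<^sup>2"
    using tJL_distortion_diff_tspan[OF T X less_imp_le[OF eps(1)] L_lin JL1[unfolded Lsp_def Pp_def]
        JL2[unfolded P_def Pp_def] S[unfolded P_def Pp_def] Y[unfolded Lsp_def]] .
  have "vect ms idx (L (\<lambda>i. X i - Y i)) \<in> vspan (Suc r)
      (\<lambda>k. if k = 0 then vect ms idx (L Pp) else vect ms idx (L (T (k - 1))))"
    unfolding Pp_def using T X L_lin Y[unfolded Lsp_def] by (rule vect_tlinear_diff_in_vspan)
  from mJL_D[OF A_JL this] obtain b where b: "\<bar>b\<bar> < \<epsilon> / 3"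
    "(vnorm m (mat_app m (prod_list ms) A (vect ms idx (L (\<lambda>i. X i - Y i)))))\<^sup>2
       = (1 + b) * (tnorm ms (L (\<lambda>i. X i - Y i)))\<^sup>2"
    unfolding vnorm_vect[OF vect] by blast
  have "\<bar>(1 + b) * (tnorm ms (L (\<lambda>i. X i - Y i)))\<^sup>2 - (tnorm ns (\<lambda>i. X i - Y i))\<^sup>2\<bar>
      \<le> (\<epsilon> / 4 + \<epsilon> / 3 + \<epsilon> / 4 * (\<epsilon> / 3)) * (tnorm ns (\<lambda>i. X i - Y i))\<^sup>2"
    by (rule abs_mult_distortion_le[OF dist less_imp_le[OF b(1)] zero_le_power2])
  also have "\<dots> \<le> \<epsilon> * (tnorm ns (\<lambda>i. X i - Y i))\<^sup>2"
    using eps mult_strict_left_mono[of \<epsilon> 1 \<epsilon>] by (intro mult_right_mono zero_le_power2) linarith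
  finally show "\<bar>(vnorm m (mat_app m (prod_list ms) A (vect ms idx (L (\<lambda>is. X is - Y is)))))\<^sup>2
      - (tnorm ns (\<lambda>is. X is - Y is))\<^sup>2\<bar> \<le> \<epsilon> * (tnorm ns (\<lambda>is. X is - Y is))\<^sup>2"
    unfolding b(2) .
qed

end
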